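(* (a) Let $\Phi=B_n$ and let $D\subset\Phi^+$ be an orthogonal subset with $\varepsilon_1\in D$ and containing no root $\varepsilon_k$ with $k\ge2$ (so $D\cap\mathcal C_1=\{\varepsilon_1\}$). Let $\tilde\Phi^+=\{\varepsilon_a\pm\varepsilon_b:2\le a<b\le n\}$ (i.e. $\Phi^+\setminus(\mathcal C_1\cup\mathcal R_0)$, a positive system of type $D_{n-1}$), $\tilde D=D\cap\tilde\Phi^+=D\setminus\{\varepsilon_1\}$, $\tilde\sigma=\prod_{\beta\in\tilde D}r_\beta$, and $l'(\tilde\sigma)=\#\{\alpha\in\tilde\Phi^+:\tilde\sigma(\alpha)\notin\tilde\Phi^+\}$. Then $$l(\sigma)=l'(\tilde\sigma)+|\mathcal C_1|+2\cdot\#\{\beta\in\tilde D:\mathrm{row}(\beta)<0\},$$ where $|\mathcal C_1|=2n-1$ and $\mathrm{row}(\beta)<0$ means $\beta=\varepsilon_a+\varepsilon_b$ for some $a<b$. (b) Let $\Phi=C_n$ and let $D\subset\Phi^+$ be an orthogonal subset with $D\cap\mathcal C_1=\{2\varepsilon_1\}$. Let $\tilde\Phi^+=\Phi^+\setminus\mathcal C_1$ (a positive system of type $C_{n-1}$ in the coordinates $\varepsilon_2,\dots,\varepsilon_n$), $\tilde D=D\cap\tilde\Phi^+$, $\tilde\sigma=\prod_{\beta\in\tilde D}r_\beta$ and $l'(\tilde\sigma)=\#\{\alpha\in\tilde\Phi^+:\tilde\sigma(\alpha)\notin\tilde\Phi^+\}$. Then $l(\sigma)=l'(\tilde\sigma)+|\mathcal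 C_1|$, where $|\mathcal C_1|=2n-1$.
   Context: Let $\Phi$ be a root system of type $B_n$, $C_n$ or $D_n$ in $\mathbb R^n$ with standard basis $\varepsilon_1,\dots,\varepsilon_n$ and positive roots $\Phi^+=\{\varepsilon_i\pm\varepsilon_j:1\le i<j\le n\}\cup\Phi_1^+$, where $\Phi_1^+=\emptyset$ for $D_n$, $\{\varepsilon_i\}$ for $B_n$, $\{2\varepsilon_i\}$ for $C_n$. $D\subset\Phi^+$ is orthogonal if its roots are pairwise orthogonal. $r_\beta$ denotes the reflection in the hyperplane orthogonal to $\beta$, $\sigma=\prod_{\beta\in D}r_\beta$, and $l(\sigma)=\#\{\alpha\in\Phi^+:\sigma(\alpha)\in-\Phi^+\}$ (the length of $\sigma$ in the Weyl group). $\mathrm{col}(\varepsilon_i\pm\varepsilon_j)=\mathrm{col}(\varepsilon_i)=\mathrm{col}(2\varepsilon_i)=i$; $\mathrm{row}(\varepsilon_i\pm\varepsilon_j)=\mp j$, $\mathrm{row}(\varepsilon_i)=0$, $\mathrm{row}(2\varepsilon_i)=-i$; $\mathcal R_i=\{\alpha\in\Phi^+:\mathrm{row}(\alpha)=i\}$, $\mathcal C_j=\{\alpha\in\Phi^+:\mathrm{col}(\alpha)=j\}$. *)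

theory Defs
  imports Complex_Main
begin

text \<open>Vectors of R^n are modelled as functions nat => real, supported on {1..n}.\<close>

type_synonym vec = "nat \<Rightarrow> real"

definition eps :: "nat \<Rightarrow> vec" where
  "eps i = (\<lambda>k. if k = i then 1 else 0)"

definition vadd :: "vec \<Rightarrow> vec \<Rightarrow> vec" where
  "vadd u v = (\<lambda>k. u k + v k)"

definition vsub :: "vec \<Rightarrow> vec \<Rightarrow> vec" where
  "vsub u v = (\<lambda>k. u k - v k)"

definition vscale :: "real \<Rightarrow> vec \<Rightarrow> vec" where
  "vscale c v = (\<lambda>k. c * v k)"

definition vneg :: "vec \<Rightarrow> vec" where
  "vneg v = (\<lambda>k. - v k)"

definition ip :: "nat \<Rightarrow> vec \<Rightarrow> vec \<Rightarrow> real" where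
  "ip n u v = (\<Sum>k=1..n. u k * v k)"

definition long_pos :: "nat \<Rightarrow> vec set" where
  "long_pos n = {vadd (eps i) (eps j) | i j. 1 \<le> i \<and> i < j \<and> j \<le> n}
              \<union> {vsub (eps i) (eps j) | i j. 1 \<le> i \<and> i < j \<and> j \<le> n}"

definition posB :: "nat \<Rightarrow> vec set" where
  "posB n = long_pos n \<union> {eps i | i. 1 \<le> i \<and> i \<le> n}"

definition posC :: "nat \<Rightarrow> vec set" where
  "posC n = long_pos n \<union> {vscale 2 (eps i) | i. 1 \<le> i \<and> i \<le> n}"

definition orthogonal_set :: "nat \<Rightarrow> vec set \<Rightarrow> bool" where
  "orthogonal_set n D \<longleftrightarrow> (\<forall>\<alpha>\<in>D. \<forall>\<beta>\<in>D. \<alpha> \<noteq> \<beta> \<longrightarrow> ip n \<alpha> \<beta> = 0)"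

definition refl :: "nat \<Rightarrow> vec \<Rightarrow> vec \<Rightarrow> vec" where
  "refl n \<beta> v = vsub v (vscale (2 * ip n v \<beta> / ip n \<beta> \<beta>) \<beta>)"

text \<open>Product of the reflections r_beta, beta in D (they commute for orthogonal D).\<close>
definition sigma :: "nat \<Rightarrow> vec set \<Rightarrow> vec \<Rightarrow> vec" where
  "sigma n D = Finite_Set.fold (\<lambda>\<beta> f. refl n \<beta> \<circ> f) id D"

definition len :: "vec set \<Rightarrow> (vec \<Rightarrow> vec) \<Rightarrow> nat" where
  "len P s = card {\<alpha> \<in> P. vneg (s \<alpha>) \<in> P}"

definition len' :: "vec set \<Rightarrow> (vec \<Rightarrow> vec) \<Rightarrow> nat" where
  "len' P s = card {\<alpha> \<in> P. s \<alpha> \<notin> P}"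

definition col :: "vec \<Rightarrow> nat" where
  "col \<alpha> = (LEAST k. \<alpha> k \<noteq> 0)"

text \<open>row(eps_i +- eps_j) = -+ j, row(eps_i) = 0, row(2 eps_i) = -i.\<close>
definition row :: "vec \<Rightarrow> real" where
  "row \<alpha> = (if \<exists>j. col \<alpha> < j \<and> \<alpha> j \<noteq> 0
             then (let j = (THE j. col \<alpha> < j \<and> \<alpha> j \<noteq> 0) in - \<alpha> j * real j)
             else if \<alpha> (col \<alpha>) = 2 then - real (col \<alpha>) else 0)"

definition colset :: "vec set \<Rightarrow> nat \<Rightarrow> vec set" where
  "colset P j = {\<alpha> \<in> P. col \<alpha> = j}"

definition rowset :: "vec set \<Rightarrow> real \<Rightarrow> vec set" where
  "rowset P i = {\<alpha> \<in> P. row \<alpha> = i}"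

end

theory Submission
  imports Defs
begin

(* Every reflection r_beta in a root of B_n or C_n is a signed permutation of coordinates,
   and reflections in orthogonal roots commute, so sigma is well defined and has the closed form
   sigma v = v - sum_beta (2<v,beta>/<beta,beta>) beta.  Hence sigma permutes the roots
   (the vectors +-e_i+-e_j and +-t e_i).  Positivity of a root is detected by a linear
   "height", so no root is positive together with its negative.  The root of D in column 1 is
   e_1 (resp. 2e_1), whose reflection negates the first coordinate, and the other roots of D have
   first coordinate 0; so sigma = neg_1 o sigma~ with sigma~ fixing the first coordinate.
   Consequently every root of column 1 becomes negative, and every other root alpha becomes
   negative iff sigma~(alpha) does.  For C_n this is already the claim.  For B_n the short roots
   e_k (k >= 2) remain; they are counted via the coordinate sum S(v) = v_1 + ... + v_n:
   S(sigma~ e_k) = -+1, while summing the closed form over k gives n - sum_beta S(beta)^2,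
   and S(beta)^2 = 4 exactly for beta = e_a + e_b (row beta < 0), and 0 for beta = e_a - e_b. *)

lemma eps_app: "eps i k = (if k = i then 1 else 0)" by (simp add: eps_def)
lemma vadd_app: "vadd u w k = u k + w k" by (simp add: vadd_def)
lemma vsub_app: "vsub u w k = u k - w k" by (simp add: vsub_def)
lemma vscale_app: "vscale c u k = c * u k" by (simp add: vscale_def)
lemma vneg_app: "vneg u k = - u k" by (simp add: vneg_def)

lemmas vec_simps = eps_app vadd_app vsub_app vscale_app vneg_app

lemma vneg_vneg: "vneg (vneg x) = x" by (simp add: vneg_def)

lemma vscale_one: "vscale 1 v = v" by (simp add: vscale_def)

lemma eps_inj: "inj eps"
proof (rule injI)
  fix a b :: nat assume "eps a = eps b"
  then have "eps a a = eps b a" by simp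
  then show "a = b" by (simp add: eps_def split: if_splits)
qed

lemma ip_sym: "ip n u v = ip n v u"
  by (simp add: ip_def mult.commute)

lemma ip_vadd: "ip n (vadd u w) v = ip n u v + ip n w v"
  by (simp add: ip_def vadd_def algebra_simps sum.distrib)

lemma ip_vsub: "ip n (vsub u w) v = ip n u v - ip n w v"
  by (simp add: ip_def vsub_def algebra_simps sum_subtractf)

lemma ip_vscale: "ip n (vscale c u) v = c * ip n u v"
  by (simp add: ip_def vscale_def algebra_simps sum_distrib_left)

lemma ip_eps_right: "1 \<le> a \<Longrightarrow> a \<le> n \<Longrightarrow> ip n v (eps a) = v a"
  by (simp add: ip_def eps_def if_distrib cong: if_cong)

lemma ip_eps: "1 \<le> a \<Longrightarrow> a \<le> n \<Longrightarrow> ip n (eps a) v = v a"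
  using ip_eps_right ip_sym by metis

section \<open>Reflections in roots are signed permutations of coordinates\<close>

definition swap_coords :: "nat \<Rightarrow> nat \<Rightarrow> vec \<Rightarrow> vec" where
  "swap_coords a b v = (\<lambda>k. v (if k = a then b else if k = b then a else k))"

definition neg_coord :: "nat \<Rightarrow> vec \<Rightarrow> vec" where
  "neg_coord a v = (\<lambda>k. if k = a then - v k else v k)"

lemma refl_diff: "a \<noteq> b \<Longrightarrow> 1 \<le> a \<Longrightarrow> a \<le> n \<Longrightarrow> 1 \<le> b \<Longrightarrow> b \<le> n \<Longrightarrow>
    refl n (vsub (eps a) (eps b)) = swap_coords a b"
  by (auto simp: fun_eq_iff refl_def ip_sym[of n _ "vsub _ _"] ip_vsub ip_eps
      swap_coords_def vec_simps field_simps)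

lemma refl_sum: "a \<noteq> b \<Longrightarrow> 1 \<le> a \<Longrightarrow> a \<le> n \<Longrightarrow> 1 \<le> b \<Longrightarrow> b \<le> n \<Longrightarrow>
    refl n (vadd (eps a) (eps b)) = neg_coord a \<circ> neg_coord b \<circ> swap_coords a b"
  by (auto simp: fun_eq_iff refl_def ip_sym[of n _ "vadd _ _"] ip_vadd ip_eps
      swap_coords_def neg_coord_def vec_simps field_simps)

lemma refl_scaled_eps: "c \<noteq> 0 \<Longrightarrow> 1 \<le> a \<Longrightarrow> a \<le> n \<Longrightarrow> refl n (vscale c (eps a)) = neg_coord a"
  by (auto simp: fun_eq_iff refl_def ip_sym[of n _ "vscale _ _"] ip_vscale ip_eps
      neg_coord_def vec_simps field_simps)

lemma refl_eps: "1 \<le> a \<Longrightarrow> a \<le> n \<Longrightarrow> refl n (eps a) = neg_coord a"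
  using refl_scaled_eps[of 1 a n] by (simp add: vscale_one)

section \<open>Products of reflections in pairwise orthogonal vectors\<close>

lemma ip_refl_orth: "ip n \<beta> \<gamma> = 0 \<Longrightarrow> ip n (refl n \<gamma> v) \<beta> = ip n v \<beta>"
  by (simp add: refl_def ip_vsub ip_vscale ip_sym[of n \<gamma> \<beta>])

text \<open>Reflections in orthogonal vectors commute; this makes sigma independent of the order of the factors.\<close>
lemma refl_commute: "ip n \<beta> \<gamma> = 0 \<Longrightarrow> refl n \<beta> \<circ> refl n \<gamma> = refl n \<gamma> \<circ> refl n \<beta>"
proof (rule ext)
  fix v
  assume orth: "ip n \<beta> \<gamma> = 0"
  then have orth': "ip n \<gamma> \<beta> = 0" by (simp add: ip_sym)
  have e1: "refl n \<beta> (refl n \<gamma> v) = vsub (refl n \<gamma> v) (vscale (2 * ip n v \<beta> / ip n \<beta> \<beta>) \<beta>)"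
    using refl_def[of n \<beta> "refl n \<gamma> v"] ip_refl_orth[OF orth] by simp
  have e2: "refl n \<gamma> (refl n \<beta> v) = vsub (refl n \<beta> v) (vscale (2 * ip n v \<gamma> / ip n \<gamma> \<gamma>) \<gamma>)"
    using refl_def[of n \<gamma> "refl n \<beta> v"] ip_refl_orth[OF orth'] by simp
  show "(refl n \<beta> \<circ> refl n \<gamma>) v = (refl n \<gamma> \<circ> refl n \<beta>) v"
    unfolding comp_def e1 e2 by (simp add: refl_def vec_simps fun_eq_iff algebra_simps)
qed

lemma sigma_empty: "sigma n {} = id"
  by (simp add: sigma_def)

lemma sigma_insert:
  assumes "orthogonal_set n (insert x A)" "finite A" "x \<notin> A"
  shows "sigma n (insert x A) = refl n x \<circ> sigma n A"
proof -
  interpret comp_fun_commute_on "insert x A" "\<lambda>\<beta> f. refl n \<beta> \<circ> f"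
  proof
    fix y z assume yz: "y \<in> insert x A" "z \<in> insert x A"
    show "(\<lambda>f. refl n z \<circ> f) \<circ> (\<lambda>f. refl n y \<circ> f) = (\<lambda>f. refl n y \<circ> f) \<circ> (\<lambda>f. refl n z \<circ> f)"
    proof (cases "y = z")
      case False
      then have "ip n z y = 0" using assms(1) yz by (auto simp: orthogonal_set_def)
      then show ?thesis using refl_commute[of n z y] by (auto simp: fun_eq_iff)
    qed simp
  qed
  show ?thesis unfolding sigma_def using assms by (simp add: fold_insert)
qed

lemma orthogonal_set_subset: "orthogonal_set n D \<Longrightarrow> A \<subseteq> D \<Longrightarrow> orthogonal_set n A"
  by (auto simp: orthogonal_set_def)

text \<open>Linearity of the inner product, in the shape produced by the closed form below.\<close>
lemma ip_minus_sum:
  "ip n (\<lambda>k. v k - (\<Sum>\<beta>\<in>A. g \<beta> * \<beta> k)) x = ip n v x - (\<Sum>\<beta>\<in>A. g \<beta> * ip n \<beta> x)"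
  unfolding ip_def
  by (simp add: algebra_simps sum_subtractf sum_distrib_left sum_distrib_right sum.swap[of _ A])

lemma sigma_closed_form:
  assumes "orthogonal_set n A" "finite A"
  shows "sigma n A v = (\<lambda>k. v k - (\<Sum>\<beta>\<in>A. (2 * ip n v \<beta> / ip n \<beta> \<beta>) * \<beta> k))"
  using assms(2,1)
proof (induction A rule: finite_induct)
  case empty
  then show ?case by (simp add: sigma_empty)
next
  case (insert x F)
  have orth: "\<forall>\<beta>\<in>F. ip n \<beta> x = 0"
    using insert by (auto simp: orthogonal_set_def)
  have IH: "sigma n F v = (\<lambda>k. v k - (\<Sum>\<beta>\<in>F. (2 * ip n v \<beta> / ip n \<beta> \<beta>) * \<beta> k))"
    using insert orthogonal_set_subset by blast
  have ip_x: "ip n (sigma n F v) x = ip n v x"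
    unfolding IH ip_minus_sum using orth by simp
  have "sigma n (insert x F) v = vsub (sigma n F v) (vscale (2 * ip n v x / ip n x x) x)"
    using sigma_insert[OF insert(4,1,2)] by (simp add: refl_def ip_x)
  then show ?case
    using insert(1,2) by (simp add: IH vec_simps fun_eq_iff algebra_simps)
qed

lemma sigma_fixes_coord:
  assumes "orthogonal_set n A" "finite A" "\<forall>\<beta>\<in>A. \<beta> m = 0"
  shows "sigma n A v m = v m"
  using sigma_closed_form[OF assms(1,2), of v] assms(3) by (auto intro!: sum.neutral)

lemma sigma_preserves:
  assumes "orthogonal_set n A" "finite A" "\<And>\<beta> x. \<beta> \<in> A \<Longrightarrow> x \<in> X \<Longrightarrow> refl n \<beta> x \<in> X"
    and "x \<in> X"
  shows "sigma n A x \<in> X"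
  using assms(2,1,3)
proof (induction A rule: finite_induct)
  case empty
  then show ?case using assms(4) by (simp add: sigma_empty)
next
  case (insert y F)
  have "sigma n F x \<in> X" using insert orthogonal_set_subset by blast
  then show ?case using sigma_insert[OF insert(4,1,2)] insert(5) by simp
qed

section \<open>The roots are permuted by sigma\<close>

definition signed_perm_closed :: "nat \<Rightarrow> vec set \<Rightarrow> bool" where
  "signed_perm_closed n X \<longleftrightarrow> (\<forall>a b x. 1 \<le> a \<longrightarrow> a \<le> n \<longrightarrow> 1 \<le> b \<longrightarrow> b \<le> n \<longrightarrow> x \<in> X \<longrightarrow>
     swap_coords a b x \<in> X \<and> neg_coord a x \<in> X)"

definition long_roots :: "nat \<Rightarrow> vec set" where
  "long_roots n = {vadd (vscale c (eps i)) (vscale d (eps j)) | c d i j.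
     (c = 1 \<or> c = -1) \<and> (d = 1 \<or> d = -1) \<and> i \<noteq> j \<and> 1 \<le> i \<and> i \<le> n \<and> 1 \<le> j \<and> j \<le> n}"

definition short_roots :: "nat \<Rightarrow> real \<Rightarrow> vec set" where
  "short_roots n t = {vscale (t * c) (eps i) | c i. (c = 1 \<or> c = -1) \<and> 1 \<le> i \<and> i \<le> n}"

definition transp_index :: "nat \<Rightarrow> nat \<Rightarrow> nat \<Rightarrow> nat" where
  "transp_index a b i = (if i = a then b else if i = b then a else i)"

lemma swap_coords_vadd: "swap_coords a b (vadd u w) = vadd (swap_coords a b u) (swap_coords a b w)"
  by (simp add: swap_coords_def vadd_def)

lemma neg_coord_vadd: "neg_coord a (vadd u w) = vadd (neg_coord a u) (neg_coord a w)"
  by (auto simp: neg_coord_def vadd_def)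

lemma swap_coords_scaled_eps: "swap_coords a b (vscale c (eps i)) = vscale c (eps (transp_index a b i))"
  by (auto simp: swap_coords_def vscale_def eps_def transp_index_def fun_eq_iff)

lemma neg_coord_scaled_eps: "neg_coord a (vscale c (eps i)) = vscale (if i = a then - c else c) (eps i)"
  by (auto simp: neg_coord_def vscale_def eps_def fun_eq_iff)

lemma transp_index_range:
  "1 \<le> a \<Longrightarrow> a \<le> n \<Longrightarrow> 1 \<le> b \<Longrightarrow> b \<le> n \<Longrightarrow> 1 \<le> i \<Longrightarrow> i \<le> n \<Longrightarrow>
   1 \<le> transp_index a b i \<and> transp_index a b i \<le> n"
  by (simp add: transp_index_def)

lemma transp_index_inj: "i \<noteq> j \<Longrightarrow> transp_index a b i \<noteq> transp_index a b j"
  by (simp add: transp_index_def)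

lemma long_roots_closed: "signed_perm_closed n (long_roots n)"
  unfolding signed_perm_closed_def
proof (intro allI impI)
  fix a b x
  assume ab: "1 \<le> a" "a \<le> n" "1 \<le> b" "b \<le> n" and "x \<in> long_roots n"
  then obtain c d i j where x: "x = vadd (vscale c (eps i)) (vscale d (eps j))"
    and cd: "c = 1 \<or> c = -1" "d = 1 \<or> d = -1" and ij: "i \<noteq> j" "1 \<le> i" "i \<le> n" "1 \<le> j" "j \<le> n"
    unfolding long_roots_def by blast
  have "swap_coords a b x = vadd (vscale c (eps (transp_index a b i))) (vscale d (eps (transp_index a b j)))"
    by (simp add: x swap_coords_vadd swap_coords_scaled_eps)
  moreover have "neg_coord a x =
      vadd (vscale (if i = a then - c else c) (eps i)) (vscale (if j = a then - d else d) (eps j))"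
    by (simp add: x neg_coord_vadd neg_coord_scaled_eps)
  ultimately show "swap_coords a b x \<in> long_roots n \<and> neg_coord a x \<in> long_roots n"
    unfolding long_roots_def using cd ij transp_index_range[OF ab] transp_index_inj[OF ij(1), of a b]
    by (smt (verit, best) mem_Collect_eq)
qed

lemma short_roots_closed: "signed_perm_closed n (short_roots n t)"
  unfolding signed_perm_closed_def
proof (intro allI impI)
  fix a b x
  assume ab: "1 \<le> a" "a \<le> n" "1 \<le> b" "b \<le> n" and "x \<in> short_roots n t"
  then obtain c i where x: "x = vscale (t * c) (eps i)" and c: "c = 1 \<or> c = -1" and i: "1 \<le> i" "i \<le> n"
    unfolding short_roots_def by blast
  have "swap_coords a b x = vscale (t * c) (eps (transp_index a b i))"
    by (simp add: x swap_coords_scaled_eps)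
  moreover have "neg_coord a x = vscale (t * (if i = a then - c else c)) (eps i)"
    by (simp add: x neg_coord_scaled_eps)
  ultimately show "swap_coords a b x \<in> short_roots n t \<and> neg_coord a x \<in> short_roots n t"
    unfolding short_roots_def using c i transp_index_range[OF ab]
    by (smt (verit, best) mem_Collect_eq)
qed

lemma refl_root_preserves:
  assumes X: "signed_perm_closed n X" and \<beta>: "\<beta> \<in> posB n \<union> posC n" and x: "x \<in> X"
  shows "refl n \<beta> x \<in> X"
proof -
  consider (sum) i j where "1 \<le> i" "i < j" "j \<le> n" "\<beta> = vadd (eps i) (eps j)"
    | (diff) i j where "1 \<le> i" "i < j" "j \<le> n" "\<beta> = vsub (eps i) (eps j)"
    | (short) i c where "1 \<le> i" "i \<le> n" "c = 1 \<or> c = 2" "\<beta> = vscale c (eps i)"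
  proof -
    have "\<beta> \<in> long_pos n \<or> (\<exists>i. 1 \<le> i \<and> i \<le> n \<and> (\<beta> = vscale 1 (eps i) \<or> \<beta> = vscale 2 (eps i)))"
      using \<beta> unfolding posB_def posC_def by (auto simp: vscale_one)
    then show ?thesis using that unfolding long_pos_def by blast
  qed
  then show ?thesis
  proof cases
    case sum
    then show ?thesis using refl_sum[of i j n] X x unfolding signed_perm_closed_def by simp
  next
    case diff
    then show ?thesis using refl_diff[of i j n] X x unfolding signed_perm_closed_def by simp
  next
    case short
    then have "c \<noteq> 0" by auto
    then show ?thesis using short refl_scaled_eps[of c i n] X x unfolding signed_perm_closed_def by simp
  qed
qed

lemma sigma_preserves_closed:
  assumes "orthogonal_set n D" "finite D" "D \<subseteq> posB n \<union> posC n" "signed_perm_closed n X" "x \<in> X"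
  shows "sigma n D x \<in> X"
  using sigma_preserves[OF assms(1,2) _ assms(5)] refl_root_preserves[OF assms(4)] assms(3) by blast

lemma signed_pair_long:
  assumes c: "c = 1 \<or> c = -1" and d: "d = 1 \<or> d = -1" and ij: "1 \<le> i" "i < j" "j \<le> n"
  defines "x \<equiv> vadd (vscale c (eps i)) (vscale d (eps j))"
  shows "x \<in> long_pos n \<or> vneg x \<in> long_pos n"
proof -
  have sum: "vadd (eps i) (eps j) \<in> long_pos n" and diff: "vsub (eps i) (eps j) \<in> long_pos n"
    using ij unfolding long_pos_def by blast+
  have "x = vadd (eps i) (eps j) \<or> x = vsub (eps i) (eps j) \<or>
        vneg x = vsub (eps i) (eps j) \<or> vneg x = vadd (eps i) (eps j)"
    using c d unfolding x_def by (auto simp: fun_eq_iff vec_simps)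
  then show ?thesis using sum diff by auto
qed

lemma long_roots_split: "x \<in> long_roots n \<Longrightarrow> x \<in> long_pos n \<or> vneg x \<in> long_pos n"
proof -
  assume "x \<in> long_roots n"
  then obtain c d i j where x: "x = vadd (vscale c (eps i)) (vscale d (eps j))"
    and cd: "c = 1 \<or> c = -1" "d = 1 \<or> d = -1" and ij: "i \<noteq> j" "1 \<le> i" "i \<le> n" "1 \<le> j" "j \<le> n"
    unfolding long_roots_def by blast
  have x': "x = vadd (vscale d (eps j)) (vscale c (eps i))" using x by (auto simp: vadd_def)
  show ?thesis
  proof (cases "i < j")
    case True
    then show ?thesis using signed_pair_long[OF cd ij(2) True ij(5)] x by simp
  next
    case False
    then have "j < i" using ij(1) by simp
    then show ?thesis using signed_pair_long[OF cd(2,1) ij(4) _ ij(3)] x' by simp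
  qed
qed

lemma long_pos_long_roots: "x \<in> long_pos n \<Longrightarrow> x \<in> long_roots n"
proof -
  assume "x \<in> long_pos n"
  then obtain i j d where ij: "1 \<le> i" "i < j" "j \<le> n" and d: "d = 1 \<or> d = -1"
    and x: "x = vadd (vscale 1 (eps i)) (vscale d (eps j))"
  proof (cases rule: UnE[OF \<open>x \<in> long_pos n\<close>[unfolded long_pos_def]])
    case 1
    then show ?thesis using that[of _ _ 1] by (auto simp: vscale_one)
  next
    case 2
    then show ?thesis using that[of _ _ "-1"] by (auto simp: fun_eq_iff vec_simps)
  qed
  show "x \<in> long_roots n"
    unfolding long_roots_def using ij d x by (intro CollectI exI[of _ 1] exI[of _ d] exI[of _ i] exI[of _ j]) simp
qed

lemma eps_short_root: "1 \<le> i \<Longrightarrow> i \<le> n \<Longrightarrow> eps i \<in> short_roots n 1"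
  unfolding short_roots_def by (intro CollectI exI[of _ 1] exI[of _ i]) (simp add: vscale_one)

lemma posB_roots: "posB n \<subseteq> long_roots n \<union> short_roots n 1"
  unfolding posB_def using long_pos_long_roots eps_short_root by blast

lemma posC_roots: "posC n \<subseteq> long_roots n \<union> short_roots n 2"
proof
  fix x assume "x \<in> posC n"
  moreover have "vscale 2 (eps i) \<in> short_roots n 2" if "1 \<le> i" "i \<le> n" for i
    unfolding short_roots_def using that by (intro CollectI exI[of _ 1] exI[of _ i]) simp
  ultimately show "x \<in> long_roots n \<union> short_roots n 2"
    unfolding posC_def using long_pos_long_roots by blast
qed

lemma short_roots_split:
  "x \<in> short_roots n t \<Longrightarrow> \<exists>i. 1 \<le> i \<and> i \<le> n \<and> (x = vscale t (eps i) \<or> vneg x = vscale t (eps i))"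
  unfolding short_roots_def by (auto simp: vscale_def vneg_def fun_eq_iff)

lemma roots_B: "x \<in> long_roots n \<union> short_roots n 1 \<Longrightarrow> x \<in> posB n \<or> vneg x \<in> posB n"
  using long_roots_split[of x n] short_roots_split[of x n 1] unfolding posB_def by (auto simp: vscale_one)

lemma roots_C: "x \<in> long_roots n \<union> short_roots n 2 \<Longrightarrow> x \<in> posC n \<or> vneg x \<in> posC n"
  using long_roots_split[of x n] short_roots_split[of x n 2] unfolding posC_def by auto

section \<open>Positivity\<close>

text \<open>The height is a linear functional that is positive on all positive roots of B_n and C_n.\<close>
definition height :: "nat \<Rightarrow> vec \<Rightarrow> real" where
  "height n v = (\<Sum>k=1..n. real (n + 1 - k) * v k)"

lemma height_eps: "1 \<le> i \<Longrightarrow> i \<le> n \<Longrightarrow> height n (eps i) = real (n + 1 - i)"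
  by (simp add: height_def eps_def if_distrib cong: if_cong)

lemma height_vadd: "height n (vadd u w) = height n u + height n w"
  by (simp add: height_def vadd_def distrib_left sum.distrib)

lemma height_vsub: "height n (vsub u w) = height n u - height n w"
  by (simp add: height_def vsub_def right_diff_distrib sum_subtractf)

lemma height_vscale: "height n (vscale c u) = c * height n u"
  by (simp add: height_def vscale_def sum_distrib_left mult.left_commute)

lemma height_vneg: "height n (vneg u) = - height n u"
  by (simp add: height_def vneg_def sum_negf)

lemma height_pos: "x \<in> posB n \<union> posC n \<Longrightarrow> height n x > 0"
  unfolding posB_def posC_def long_pos_def
  by (auto simp: height_vadd height_vsub height_vscale height_eps of_nat_diff)

lemma pos_not_neg: "x \<in> posB n \<union> posC n \<Longrightarrow> vneg x \<notin> posB n \<union> posC n"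
  using height_pos[of x n] height_pos[of "vneg x" n] height_vneg[of n x] by auto

lemma neg_pos_iff:
  assumes "y \<in> Q \<or> vneg y \<in> Q" "Q \<subseteq> P" "P \<subseteq> posB n \<union> posC n"
  shows "vneg y \<in> P \<longleftrightarrow> y \<notin> Q"
  using assms pos_not_neg[of y n] pos_not_neg[of "vneg y" n] vneg_vneg[of y] by blast

lemma pos_support: "x \<in> posB n \<union> posC n \<Longrightarrow> k = 0 \<or> n < k \<Longrightarrow> x k = 0"
  unfolding posB_def posC_def long_pos_def by (auto simp: vec_simps)

lemma pos_first_coord: "x \<in> posB n \<union> posC n \<Longrightarrow> x 1 \<ge> 0"
  unfolding posB_def posC_def long_pos_def by (auto simp: vec_simps)

lemma pos_nonzero: "x \<in> posB n \<union> posC n \<Longrightarrow> \<exists>k. x k \<noteq> 0"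
  unfolding posB_def posC_def long_pos_def
  by (auto simp: vec_simps; metis less_irrefl)

lemma long_pos_subset: "long_pos n \<subseteq> posB n \<inter> posC n"
  by (auto simp: posB_def posC_def)

lemma finite_long_pos: "finite (long_pos n)"
proof -
  have "long_pos n \<subseteq> (\<lambda>(i,j). vadd (eps i) (eps j)) ` ({1..n} \<times> {1..n})
                      \<union> (\<lambda>(i,j). vsub (eps i) (eps j)) ` ({1..n} \<times> {1..n})"
    unfolding long_pos_def by force
  then show ?thesis by (rule finite_subset) auto
qed

lemma finite_posB: "finite (posB n)"
proof -
  have "{eps i | i. 1 \<le> i \<and> i \<le> n} = eps ` {1..n}" by auto
  then show ?thesis unfolding posB_def using finite_long_pos by simp
qed

lemma finite_posC: "finite (posC n)"
proof -
  have "{vscale 2 (eps i) | i. 1 \<le> i \<and> i \<le> n} = (\<lambda>i. vscale 2 (eps i)) ` {1..n}" by auto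
  then show ?thesis unfolding posC_def using finite_long_pos by simp
qed

section \<open>Columns and rows\<close>

lemma col_eq: "x i \<noteq> 0 \<Longrightarrow> (\<forall>k<i. x k = 0) \<Longrightarrow> col x = i"
  unfolding col_def by (rule Least_equality) (auto simp: not_less[symmetric])

lemma col_one_iff:
  assumes "x \<in> posB n \<union> posC n"
  shows "col x = 1 \<longleftrightarrow> x 1 \<noteq> 0"
proof
  assume "col x = 1"
  moreover have "x (col x) \<noteq> 0" unfolding col_def using pos_nonzero[OF assms] by (rule LeastI_ex)
  ultimately show "x 1 \<noteq> 0" by simp
next
  assume "x 1 \<noteq> 0"
  moreover have "x 0 = 0" using pos_support[OF assms] by simp
  ultimately show "col x = 1" by (intro col_eq) (auto simp: less_Suc_eq)
qed

lemma colset_one: "P \<subseteq> posB n \<union> posC n \<Longrightarrow> colset P 1 = {x \<in> P. x 1 \<noteq> 0}"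
  unfolding colset_def using col_one_iff by blast

lemma row_eps: "row (eps i) = 0"
proof -
  have "col (eps i) = i" by (rule col_eq) (auto simp: eps_def)
  then show ?thesis unfolding row_def by (auto simp: eps_def)
qed

lemma row_signed_pair:
  assumes "i < j" "s = 1 \<or> s = -1"
  shows "row (vadd (eps i) (vscale s (eps j))) = - s * real j"
proof -
  let ?x = "vadd (eps i) (vscale s (eps j))"
  have col: "col ?x = i" by (rule col_eq) (use assms in \<open>auto simp: vec_simps\<close>)
  have the_j: "(THE j'. i < j' \<and> ?x j' \<noteq> 0) = j"
    by (rule the_equality) (use assms in \<open>auto simp: vec_simps split: if_splits\<close>)
  have "\<exists>j'. col ?x < j' \<and> ?x j' \<noteq> 0" unfolding col using assms by (auto simp: vec_simps)
  then show ?thesis unfolding row_def col the_j Let_def using assms by (auto simp: vec_simps)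
qed

lemma row_sum: "i < j \<Longrightarrow> row (vadd (eps i) (eps j)) = - real j"
  using row_signed_pair[of i j 1] by (simp add: vscale_one)

lemma row_diff: "i < j \<Longrightarrow> row (vsub (eps i) (eps j)) = real j"
proof -
  assume "i < j"
  moreover have "vsub (eps i) (eps j) = vadd (eps i) (vscale (-1) (eps j))"
    by (simp add: fun_eq_iff vec_simps)
  ultimately show ?thesis using row_signed_pair[of i j "-1"] by simp
qed

lemma row_long_pos: "x \<in> long_pos n \<Longrightarrow> row x \<noteq> 0"
  unfolding long_pos_def using row_sum row_diff by fastforce

lemma eps_not_long_pos: "eps k \<notin> long_pos n"
  using row_long_pos row_eps by metis

lemma rowset_zero_B: "rowset (posB n) 0 = posB n - long_pos n"
  unfolding rowset_def posB_def using row_long_pos row_eps by auto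

lemma first_column_long:
  "{x \<in> long_pos n. x 1 \<noteq> 0} =
     (\<lambda>j. vadd (eps 1) (eps j)) ` {2..n} \<union> (\<lambda>j. vsub (eps 1) (eps j)) ` {2..n}"
proof -
  have "vadd (eps 1) (eps j) \<in> long_pos n \<and> vsub (eps 1) (eps j) \<in> long_pos n"
    if "2 \<le> j" "j \<le> n" for j
  proof -
    have "(1::nat) \<le> 1" "1 < j" using that by simp_all
    then show ?thesis unfolding long_pos_def using that by blast
  qed
  then have "(\<lambda>j. vadd (eps 1) (eps j)) ` {2..n} \<union> (\<lambda>j. vsub (eps 1) (eps j)) ` {2..n}
      \<subseteq> {x \<in> long_pos n. x 1 \<noteq> 0}"
    by (auto simp: vec_simps)
  moreover have "{x \<in> long_pos n. x 1 \<noteq> 0}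
      \<subseteq> (\<lambda>j. vadd (eps 1) (eps j)) ` {2..n} \<union> (\<lambda>j. vsub (eps 1) (eps j)) ` {2..n}"
    unfolding long_pos_def by (auto simp: vec_simps split: if_splits)
  ultimately show ?thesis by blast
qed

lemma card_first_column_long: "card {x \<in> long_pos n. x 1 \<noteq> 0} = 2 * (n - 1)"
proof -
  let ?A = "(\<lambda>j. vadd (eps 1) (eps j)) ` {2..n}" and ?B = "(\<lambda>j. vsub (eps 1) (eps j)) ` {2..n}"
  have "inj_on (\<lambda>j. vadd (eps 1) (eps j)) {2..n}"
  proof (rule inj_onI)
    fix a b assume "a \<in> {2..n}" "vadd (eps 1) (eps a) = vadd (eps 1) (eps b)"
    then have "vadd (eps 1) (eps a) a = vadd (eps 1) (eps b) a" by simp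
    then show "a = b" using \<open>a \<in> {2..n}\<close> by (auto simp: vec_simps split: if_splits)
  qed
  moreover have "inj_on (\<lambda>j. vsub (eps 1) (eps j)) {2..n}"
  proof (rule inj_onI)
    fix a b assume "a \<in> {2..n}" "vsub (eps 1) (eps a) = vsub (eps 1) (eps b)"
    then have "vsub (eps 1) (eps a) a = vsub (eps 1) (eps b) a" by simp
    then show "a = b" using \<open>a \<in> {2..n}\<close> by (auto simp: vec_simps split: if_splits)
  qed
  moreover have "?A \<inter> ?B = {}"
  proof (rule ccontr)
    assume "?A \<inter> ?B \<noteq> {}"
    then obtain a b where ab: "a \<in> {2..n}" "vadd (eps 1) (eps a) = vsub (eps 1) (eps b)" by blast
    then have "vadd (eps 1) (eps a) a = vsub (eps 1) (eps b) a" by simp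
    then show False using ab(1) by (auto simp: vec_simps split: if_splits)
  qed
  ultimately show ?thesis
    unfolding first_column_long by (simp add: card_Un_disjoint card_image)
qed

lemma card_first_column:
  assumes s: "\<And>j. 2 \<le> j \<Longrightarrow> s j = 0" and n: "1 \<le> n"
  shows "card (insert s {x \<in> long_pos n. x 1 \<noteq> 0}) = 2 * n - 1"
proof -
  have "s \<notin> {x \<in> long_pos n. x 1 \<noteq> 0}"
  proof
    assume "s \<in> {x \<in> long_pos n. x 1 \<noteq> 0}"
    then obtain j where "2 \<le> j" "s = vadd (eps 1) (eps j) \<or> s = vsub (eps 1) (eps j)"
      unfolding first_column_long by auto
    then show False using s[of j] by (auto simp: vec_simps)
  qed
  then show ?thesis
    using finite_long_pos[of n] card_first_column_long[of n] n by simp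
qed

lemma card_colset_B: "card (colset (posB n) 1) = 2 * n - 1"
proof (cases "n = 0")
  case True
  then show ?thesis by (simp add: colset_def posB_def long_pos_def)
next
  case False
  have "colset (posB n) 1 = {x \<in> posB n. x 1 \<noteq> 0}" by (rule colset_one[of _ n]) simp
  also have "\<dots> = insert (eps 1) {x \<in> long_pos n. x 1 \<noteq> 0}"
    using False
    by (auto simp: posB_def vec_simps split: if_splits)
  finally show ?thesis using card_first_column[of "eps 1" n] False by (simp add: vec_simps)
qed

lemma card_colset_C: "card (colset (posC n) 1) = 2 * n - 1"
proof (cases "n = 0")
  case True
  then show ?thesis by (simp add: colset_def posC_def long_pos_def)
next
  case False
  have "colset (posC n) 1 = {x \<in> posC n. x 1 \<noteq> 0}" by (rule colset_one[of _ n]) simp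
  also have "\<dots> = insert (vscale 2 (eps 1)) {x \<in> long_pos n. x 1 \<noteq> 0}"
    using False
    by (auto simp: posC_def vec_simps split: if_splits)
  finally show ?thesis using card_first_column[of "vscale 2 (eps 1)" n] False by (simp add: vec_simps)
qed

section \<open>Splitting off the reflection in the first coordinate\<close>

lemma signed_perm_closed_Un:
  "signed_perm_closed n X \<Longrightarrow> signed_perm_closed n Y \<Longrightarrow> signed_perm_closed n (X \<union> Y)"
  unfolding signed_perm_closed_def by blast

lemma sigma_remove_first:
  assumes "orthogonal_set n D" "finite D" "e \<in> D" "refl n e = neg_coord 1"
  shows "sigma n D = neg_coord 1 \<circ> sigma n (D - {e})"
proof -
  have "D = insert e (D - {e})" using assms(3) by blast
  then have "sigma n D = refl n e \<circ> sigma n (D - {e})"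
    using sigma_insert[of n e "D - {e}"] assms(1,2) by (metis finite_Diff Diff_iff singletonI)
  then show ?thesis using assms(4) by simp
qed

lemma len_neg_first_coord:
  assumes P: "P \<subseteq> posB n \<union> posC n" "finite P"
    and roots: "\<And>\<alpha>. \<alpha> \<in> P \<Longrightarrow> neg_coord 1 (t \<alpha>) \<in> P \<or> vneg (neg_coord 1 (t \<alpha>)) \<in> P"
    and fix1: "\<And>v. t v 1 = v 1"
  shows "len P (neg_coord 1 \<circ> t) = card (colset P 1) + card {\<alpha> \<in> P. \<alpha> 1 = 0 \<and> vneg (t \<alpha>) \<in> P}"
proof -
  have column_one: "vneg (neg_coord 1 (t \<alpha>)) \<in> P" if "\<alpha> \<in> P" "\<alpha> 1 \<noteq> 0" for \<alpha>
  proof -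
    have "neg_coord 1 (t \<alpha>) 1 < 0"
      using pos_first_coord[of \<alpha> n] that P(1) fix1 by (force simp: neg_coord_def)
    then have "neg_coord 1 (t \<alpha>) \<notin> P" using pos_first_coord P(1) by force
    then show ?thesis using roots that(1) by blast
  qed
  have other: "neg_coord 1 (t \<alpha>) = t \<alpha>" if "\<alpha> 1 = 0" for \<alpha>
    using fix1[of \<alpha>] that by (auto simp: neg_coord_def fun_eq_iff)
  have "{\<alpha> \<in> P. vneg ((neg_coord 1 \<circ> t) \<alpha>) \<in> P} =
        colset P 1 \<union> {\<alpha> \<in> P. \<alpha> 1 = 0 \<and> vneg (t \<alpha>) \<in> P}"
    using colset_one[OF P(1)] column_one other by auto
  moreover have "colset P 1 \<inter> {\<alpha> \<in> P. \<alpha> 1 = 0 \<and> vneg (t \<alpha>) \<in> P} = {}"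
    using colset_one[OF P(1)] by auto
  ultimately show ?thesis
    unfolding len_def using P(2) by (simp add: card_Un_disjoint colset_def)
qed

lemma len_remove_first_root:
  assumes D: "D \<subseteq> posB n \<union> posC n" "orthogonal_set n D" "finite D"
    and e: "e \<in> D" "refl n e = neg_coord 1" and first: "\<forall>\<beta>\<in>D - {e}. \<beta> 1 = 0"
    and X: "signed_perm_closed n X" "P \<subseteq> X" "\<forall>x\<in>X. x \<in> P \<or> vneg x \<in> P"
    and P: "P \<subseteq> posB n \<union> posC n" "finite P"
  shows "len P (sigma n D) =
           card (colset P 1) + card {\<alpha> \<in> P. \<alpha> 1 = 0 \<and> vneg (sigma n (D - {e}) \<alpha>) \<in> P}"
proof -
  have sig: "sigma n D = neg_coord 1 \<circ> sigma n (D - {e})"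
    by (rule sigma_remove_first[OF D(2,3) e])
  show ?thesis
    unfolding sig
  proof (rule len_neg_first_coord[OF P])
    fix \<alpha> assume "\<alpha> \<in> P"
    then have "sigma n D \<alpha> \<in> X" using sigma_preserves_closed[OF D(2,3,1) X(1)] X(2) by blast
    then show "neg_coord 1 (sigma n (D - {e}) \<alpha>) \<in> P \<or> vneg (neg_coord 1 (sigma n (D - {e}) \<alpha>)) \<in> P"
      using X(3) sig by simp
  next
    fix v
    show "sigma n (D - {e}) v 1 = v 1"
      using sigma_fixes_coord[of n "D - {e}" 1 v] orthogonal_set_subset[OF D(2)] D(3) first by blast
  qed
qed

section \<open>Part (b): type C\<close>

lemma roots_C_closed: "signed_perm_closed n (long_roots n \<union> short_roots n 2)"
  by (intro signed_perm_closed_Un long_roots_closed short_roots_closed)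

lemma first_coord_nonzero_range: "x \<in> posB n \<union> posC n \<Longrightarrow> x 1 \<noteq> 0 \<Longrightarrow> 1 \<le> n"
  using pos_support[of x n 1] by (cases "n = 0") auto

theorem length_reduction_C:
  assumes D: "D \<subseteq> posC n" "orthogonal_set n D" "D \<inter> colset (posC n) 1 = {vscale 2 (eps 1)}"
  defines "Pt \<equiv> posC n - colset (posC n) 1"
  shows "len (posC n) (sigma n D) = len' Pt (sigma n (D \<inter> Pt)) + card (colset (posC n) 1)"
proof -
  let ?e = "vscale 2 (eps 1)" and ?X = "long_roots n \<union> short_roots n 2"
  let ?t = "sigma n (D - {?e})"
  have col: "colset (posC n) 1 = {x \<in> posC n. x 1 \<noteq> 0}" by (rule colset_one[of _ n]) simp
  have Pt: "Pt = {x \<in> posC n. x 1 = 0}" unfolding Pt_def col by blast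
  have e: "?e \<in> D" "?e \<in> posC n" using D(3) unfolding colset_def by blast+
  then have n: "1 \<le> n" using first_coord_nonzero_range[of ?e n] by (simp add: vec_simps)
  have fin: "finite D" using finite_subset[OF D(1) finite_posC] .
  have Dt: "D \<inter> Pt = D - {?e}" using D(1,3) unfolding Pt_def by blast
  have first: "\<forall>\<beta>\<in>D - {?e}. \<beta> 1 = 0" using Dt Pt by blast
  have orth: "orthogonal_set n (D - {?e})" using D(2) orthogonal_set_subset by blast
  have "len (posC n) (sigma n D) =
          card (colset (posC n) 1) + card {\<alpha> \<in> posC n. \<alpha> 1 = 0 \<and> vneg (?t \<alpha>) \<in> posC n}"
  proof (rule len_remove_first_root[OF _ D(2) fin e(1) refl_scaled_eps first roots_C_closed])
    show "\<forall>x\<in>?X. x \<in> posC n \<or> vneg x \<in> posC n" using roots_C by blast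
  qed (use D(1) posC_roots finite_posC n in auto)
  moreover have "{\<alpha> \<in> posC n. \<alpha> 1 = 0 \<and> vneg (?t \<alpha>) \<in> posC n} = {\<alpha> \<in> Pt. ?t \<alpha> \<notin> Pt}"
  proof -
    have "vneg (?t \<alpha>) \<in> posC n \<longleftrightarrow> ?t \<alpha> \<notin> Pt" if \<alpha>: "\<alpha> \<in> Pt" for \<alpha>
    proof (rule neg_pos_iff)
      have "?t \<alpha> \<in> ?X"
        using sigma_preserves_closed[OF orth _ _ roots_C_closed] fin D(1) posC_roots \<alpha> Pt by blast
      moreover have "?t \<alpha> 1 = 0"
        using sigma_fixes_coord[OF orth _ first] fin Pt \<alpha> by auto
      ultimately show "?t \<alpha> \<in> Pt \<or> vneg (?t \<alpha>) \<in> Pt"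
        using roots_C Pt by (auto simp: vec_simps)
    qed (use Pt in auto)
    then show ?thesis using Pt by blast
  qed
  ultimately show ?thesis unfolding len'_def Dt by simp
qed

section \<open>Short roots of B_n made negative by sigma\<close>

definition coord_sum :: "nat \<Rightarrow> vec \<Rightarrow> real" where
  "coord_sum n v = (\<Sum>m=1..n. v m)"

lemma coord_sum_minus_sum:
  "coord_sum n (\<lambda>k. v k - (\<Sum>\<beta>\<in>A. g \<beta> * \<beta> k)) = coord_sum n v - (\<Sum>\<beta>\<in>A. g \<beta> * coord_sum n \<beta>)"
  unfolding coord_sum_def by (simp add: sum_subtractf sum_distrib_left sum.swap[of _ A])

lemma coord_sum_scaled_eps: "1 \<le> i \<Longrightarrow> i \<le> n \<Longrightarrow> coord_sum n (vscale c (eps i)) = c"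
  by (simp add: coord_sum_def vscale_def eps_def if_distrib cong: if_cong)

lemma coord_sum_eps: "1 \<le> i \<Longrightarrow> i \<le> n \<Longrightarrow> coord_sum n (eps i) = 1"
  using coord_sum_scaled_eps[of i n 1] by (simp add: vscale_one)

lemma coord_sum_square_long:
  assumes "\<beta> \<in> long_pos n"
  shows "coord_sum n \<beta> * coord_sum n \<beta> = (if row \<beta> < 0 then 4 else 0)"
proof -
  have add: "coord_sum n (vadd u w) = coord_sum n u + coord_sum n w"
    and sub: "coord_sum n (vsub u w) = coord_sum n u - coord_sum n w" for u w
    by (simp_all add: coord_sum_def vec_simps sum.distrib sum_subtractf)
  show ?thesis
    using assms row_sum row_diff unfolding long_pos_def by (auto simp: add sub coord_sum_eps)
qed

lemma sum_sign_count:
  "finite K \<Longrightarrow> (\<Sum>k\<in>K. (if P k then -1 else 1 :: real)) = real (card K) - 2 * real (card {k\<in>K. P k})"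
proof (induction K rule: finite_induct)
  case (insert x F)
  have "{k \<in> insert x F. P k} = (if P x then insert x {k\<in>F. P k} else {k\<in>F. P k})" by auto
  moreover have "x \<notin> {k\<in>F. P k}" using insert by auto
  ultimately show ?case using insert by (simp add: card_insert_if)
qed simp

lemma coord_sum_sigma_eps_sign:
  assumes D: "D \<subseteq> long_pos n" "orthogonal_set n D" and k: "1 \<le> k" "k \<le> n"
  shows "coord_sum n (sigma n D (eps k)) = (if vneg (sigma n D (eps k)) \<in> posB n then -1 else 1)"
proof -
  have "finite D" using finite_subset[OF D(1) finite_long_pos] .
  then have "sigma n D (eps k) \<in> short_roots n 1"
    using sigma_preserves_closed[OF D(2) _ _ short_roots_closed] D(1) long_pos_subset
      eps_short_root[OF k] by blast
  then obtain c i where c: "c = 1 \<or> c = -1" and i: "1 \<le> i" "i \<le> n"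
    and img: "sigma n D (eps k) = vscale c (eps i)"
    unfolding short_roots_def by auto
  have pos: "eps i \<in> posB n" unfolding posB_def using i by auto
  show ?thesis
    using c
  proof
    assume "c = 1"
    then show ?thesis
      using img pos pos_not_neg[of "eps i" n] coord_sum_eps[OF i] by (simp add: vscale_one)
  next
    assume "c = -1"
    then have "vneg (sigma n D (eps k)) = eps i" using img by (simp add: fun_eq_iff vec_simps)
    then show ?thesis using img pos \<open>c = -1\<close> coord_sum_scaled_eps[OF i] by simp
  qed
qed

lemma coord_sum_sigma_eps:
  assumes D: "D \<subseteq> long_pos n" "orthogonal_set n D" and k: "1 \<le> k" "k \<le> n"
  shows "coord_sum n (sigma n D (eps k)) = 1 - (\<Sum>\<beta>\<in>D. \<beta> k * coord_sum n \<beta>)"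
proof -
  have ip_long: "ip n \<beta> \<beta> = 2" if "\<beta> \<in> long_pos n" for \<beta>
    using that unfolding long_pos_def by (auto simp: ip_vadd ip_vsub ip_eps vec_simps)
  have "sigma n D (eps k) = (\<lambda>m. eps k m - (\<Sum>\<beta>\<in>D. (2 * ip n (eps k) \<beta> / ip n \<beta> \<beta>) * \<beta> m))"
    using sigma_closed_form[OF D(2) finite_subset[OF D(1) finite_long_pos]] .
  also have "\<dots> = (\<lambda>m. eps k m - (\<Sum>\<beta>\<in>D. \<beta> k * \<beta> m))"
    using D(1) k ip_long ip_eps[OF k] by (intro ext arg_cong2[where f="(-)"] refl sum.cong) auto
  finally show ?thesis
    by (simp add: coord_sum_minus_sum coord_sum_eps[OF k])
qed

text \<open>Summing both descriptions of S(sigma e_k) over k: the number of short roots of B_n made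
  negative is twice the number of roots e_a + e_b in D.\<close>
lemma short_roots_made_negative:
  assumes D: "D \<subseteq> long_pos n" "orthogonal_set n D"
  shows "card {\<alpha> \<in> eps ` {1..n}. vneg (sigma n D \<alpha>) \<in> posB n} = 2 * card {\<beta> \<in> D. row \<beta> < 0}"
proof -
  define K where "K = {k \<in> {1..n}. vneg (sigma n D (eps k)) \<in> posB n}"
  have fin: "finite D" using finite_subset[OF D(1) finite_long_pos] .
  have "(\<Sum>k=1..n. coord_sum n (sigma n D (eps k))) = real n - 2 * real (card K)"
    using coord_sum_sigma_eps_sign[OF D] sum_sign_count[of "{1..n}"] unfolding K_def by simp
  moreover have "(\<Sum>k=1..n. coord_sum n (sigma n D (eps k))) = real n - 4 * real (card {\<beta> \<in> D. row \<beta> < 0})"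
  proof -
    have "(\<Sum>k=1..n. coord_sum n (sigma n D (eps k))) = (\<Sum>k=1..n. 1 - (\<Sum>\<beta>\<in>D. \<beta> k * coord_sum n \<beta>))"
      using coord_sum_sigma_eps[OF D] by simp
    also have "\<dots> = real n - (\<Sum>\<beta>\<in>D. (\<Sum>k=1..n. \<beta> k) * coord_sum n \<beta>)"
      by (simp add: sum_subtractf sum_distrib_right) (rule sum.swap)
    also have "\<dots> = real n - (\<Sum>\<beta>\<in>D. coord_sum n \<beta> * coord_sum n \<beta>)"
      by (simp add: coord_sum_def)
    also have "(\<Sum>\<beta>\<in>D. coord_sum n \<beta> * coord_sum n \<beta>) = (\<Sum>\<beta>\<in>D. if row \<beta> < 0 then 4 else 0)"
      using D(1) by (intro sum.cong refl coord_sum_square_long) auto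
    also have "\<dots> = 4 * real (card {\<beta> \<in> D. row \<beta> < 0})"
      using sum.inter_filter[OF fin, of "\<lambda>_. 4::real" "\<lambda>\<beta>. row \<beta> < 0"] by simp
    finally show ?thesis .
  qed
  ultimately have "card K = 2 * card {\<beta> \<in> D. row \<beta> < 0}" by linarith
  moreover have "{\<alpha> \<in> eps ` {1..n}. vneg (sigma n D \<alpha>) \<in> posB n} = eps ` K"
    unfolding K_def by auto
  moreover have "card (eps ` K) = card K"
    using card_image inj_on_subset[OF eps_inj] by blast
  ultimately show ?thesis by simp
qed

section \<open>Part (a): type B\<close>

lemma roots_B_closed: "signed_perm_closed n (long_roots n \<union> short_roots n 1)"
  by (intro signed_perm_closed_Un long_roots_closed short_roots_closed)

lemma other_roots_B:
  assumes D: "D \<subseteq> posB n" "orthogonal_set n D" "eps 1 \<in> D" "\<forall>k. 2 \<le> k \<longrightarrow> eps k \<notin> D"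
  shows "D - {eps 1} \<subseteq> {x \<in> long_pos n. x 1 = 0}"
proof
  fix \<beta> assume \<beta>: "\<beta> \<in> D - {eps 1}"
  have "1 \<le> n" using D(1,3) first_coord_nonzero_range[of "eps 1" n] by (auto simp: vec_simps)
  moreover have "ip n \<beta> (eps 1) = 0" using D(2,3) \<beta> unfolding orthogonal_set_def by blast
  ultimately have first: "\<beta> 1 = 0" using ip_eps_right[of 1 n \<beta>] by simp
  have "\<beta> \<in> long_pos n"
  proof (rule ccontr)
    assume "\<beta> \<notin> long_pos n"
    then obtain i where "1 \<le> i" "\<beta> = eps i" using \<beta> D(1) unfolding posB_def by blast
    then show False using \<beta> D(4) first by (cases "i = 1") (auto simp: vec_simps)
  qed
  then show "\<beta> \<in> {x \<in> long_pos n. x 1 = 0}" using first by blast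
qed

lemma negative_first_coord_zero_B:
  assumes A: "A \<subseteq> {x \<in> long_pos n. x 1 = 0}" "orthogonal_set n A"
  defines "Pt \<equiv> {x \<in> long_pos n. x 1 = 0}"
  shows "{\<alpha> \<in> posB n. \<alpha> 1 = 0 \<and> vneg (sigma n A \<alpha>) \<in> posB n} =
           {\<alpha> \<in> Pt. sigma n A \<alpha> \<notin> Pt} \<union> {\<alpha> \<in> eps ` {1..n}. vneg (sigma n A \<alpha>) \<in> posB n}"
proof -
  have fin: "finite A" using finite_subset[OF _ finite_long_pos] A(1) by blast
  have fix1: "sigma n A v 1 = v 1" for v using sigma_fixes_coord[OF A(2) fin] A(1) by blast
  have long: "vneg (sigma n A \<alpha>) \<in> posB n \<longleftrightarrow> sigma n A \<alpha> \<notin> Pt" if \<alpha>: "\<alpha> \<in> Pt" for \<alpha>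
  proof (rule neg_pos_iff)
    have "sigma n A \<alpha> \<in> long_roots n"
      using sigma_preserves_closed[OF A(2) fin _ long_roots_closed] A(1) long_pos_subset
        long_pos_long_roots \<alpha> unfolding Pt_def by blast
    then show "sigma n A \<alpha> \<in> Pt \<or> vneg (sigma n A \<alpha>) \<in> Pt"
      using long_roots_split fix1[of \<alpha>] \<alpha> unfolding Pt_def by (auto simp: vec_simps)
  qed (use long_pos_subset in \<open>auto simp: Pt_def\<close>)
  have "vneg (sigma n A (eps 1)) \<notin> posB n"
    using pos_first_coord[of "vneg (sigma n A (eps 1))" n] fix1[of "eps 1"] by (auto simp: vec_simps)
  then have short: "\<alpha> 1 = 0" if "\<alpha> \<in> eps ` {1..n}" "vneg (sigma n A \<alpha>) \<in> posB n" for \<alpha>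
    using that by (auto simp: vec_simps)
  show ?thesis
    using long short unfolding Pt_def posB_def by (auto simp: long_pos_subset)
qed

theorem length_reduction_B:
  assumes D: "D \<subseteq> posB n" "orthogonal_set n D" "eps 1 \<in> D" "\<forall>k. 2 \<le> k \<longrightarrow> eps k \<notin> D"
  defines "Pt \<equiv> posB n - (colset (posB n) 1 \<union> rowset (posB n) 0)"
  shows "len (posB n) (sigma n D) = len' Pt (sigma n (D \<inter> Pt)) + card (colset (posB n) 1)
          + 2 * card {\<beta> \<in> D \<inter> Pt. row \<beta> < 0}"
proof -
  let ?X = "long_roots n \<union> short_roots n 1" and ?t = "sigma n (D - {eps 1})"
  have col: "colset (posB n) 1 = {x \<in> posB n. x 1 \<noteq> 0}" by (rule colset_one[of _ n]) simp
  have Pt: "Pt = {x \<in> long_pos n. x 1 = 0}"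
    unfolding Pt_def col rowset_zero_B using long_pos_subset by blast
  have Dt: "D \<inter> Pt = D - {eps 1}" using other_roots_B[OF D] Pt by (auto simp: vec_simps)
  have n: "1 \<le> n" using D(1,3) first_coord_nonzero_range[of "eps 1" n] by (auto simp: vec_simps)
  have orth: "orthogonal_set n (D - {eps 1})" using D(2) orthogonal_set_subset by blast
  have "len (posB n) (sigma n D) =
          card (colset (posB n) 1) + card {\<alpha> \<in> posB n. \<alpha> 1 = 0 \<and> vneg (?t \<alpha>) \<in> posB n}"
  proof (rule len_remove_first_root[OF _ D(2) _ D(3) refl_eps _ roots_B_closed])
    show "\<forall>x\<in>?X. x \<in> posB n \<or> vneg x \<in> posB n" using roots_B by blast
  qed (use D(1) other_roots_B[OF D] posB_roots finite_posB finite_subset[OF D(1) finite_posB] n in auto)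
  also have "{\<alpha> \<in> posB n. \<alpha> 1 = 0 \<and> vneg (?t \<alpha>) \<in> posB n} =
               {\<alpha> \<in> Pt. ?t \<alpha> \<notin> Pt} \<union> {\<alpha> \<in> eps ` {1..n}. vneg (?t \<alpha>) \<in> posB n}"
    unfolding Pt by (rule negative_first_coord_zero_B[OF other_roots_B[OF D] orth])
  also have "card \<dots> = len' Pt ?t + 2 * card {\<beta> \<in> D - {eps 1}. row \<beta> < 0}"
  proof -
    have "finite Pt" using finite_long_pos Pt by simp
    moreover have "Pt \<inter> eps ` {1..n} = {}" using Pt eps_not_long_pos by blast
    moreover have "D - {eps 1} \<subseteq> long_pos n" using other_roots_B[OF D] by blast
    ultimately show ?thesis
      using short_roots_made_negative[OF _ orth]
      by (simp add: card_Un_disjoint len'_def disjoint_iff)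
  qed
  finally show ?thesis unfolding Dt by simp
qed

theorem lemma3p4:
  fixes n :: nat
  shows
  "(\<forall>D. D \<subseteq> posB n \<and> orthogonal_set n D \<and> eps 1 \<in> D
        \<and> (\<forall>k. 2 \<le> k \<longrightarrow> eps k \<notin> D) \<longrightarrow>
      (let Pt = posB n - (colset (posB n) 1 \<union> rowset (posB n) 0);
           Dt = D \<inter> Pt in
       len (posB n) (sigma n D) =
         len' Pt (sigma n Dt) + card (colset (posB n) 1)
         + 2 * card {\<beta> \<in> Dt. row \<beta> < 0}
       \<and> card (colset (posB n) 1) = 2 * n - 1))
   \<and>
   (\<forall>D. D \<subseteq> posC n \<and> orthogonal_set n D
        \<and> D \<inter> colset (posC n) 1 = {vscale 2 (eps 1)} \<longrightarrow>
      (let Pt = posC n - colset (posC n) 1;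
           Dt = D \<inter> Pt in
       len (posC n) (sigma n D) = len' Pt (sigma n Dt) + card (colset (posC n) 1)
       \<and> card (colset (posC n) 1) = 2 * n - 1))"
  unfolding Let_def
  using length_reduction_B[of _ n] length_reduction_C[of _ n] card_colset_B[of n] card_colset_C[of n]
  by blast

end
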